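(* Let $w\in\Sigma^*$ and let $u$ be a scattered factor of $w$. Then $C(w,u)=\{u\}$ if and only if $w$ is the perfect shuffle of $u$ with itself, i.e., $w=u[1]u[1]u[2]u[2]\cdots u[|u|]u[|u|]$.
   Context: An embedding of $u$ in $w$ is a map $e:\{1,\dots,|u|\}\to\{1,\dots,|w|\}$ with $e(1)<\dots<e(|u|)$ and $u[i]=w[e(i)]$. The shuffle $\mathrm{Sh}(u,v)$ is the set of words of length $|u|+|v|$ admitting an embedding of $u$ and one of $v$ with disjoint images covering all positions, and $C(w,u)=\{v\in\Sigma^{|w|-|u|}: w\in\mathrm{Sh}(u,v)\}$. For words $u,v$ of equal length $m$, the perfect shuffle is $u[1]v[1]u[2]v[2]\cdots u[m]v[m]$. *)

theory Defs
  imports Main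
begin

(* Words are lists; positions are 0-based (position i here = position i+1 in the paper). *)

definition embedding :: "'a list \<Rightarrow> 'a list \<Rightarrow> (nat \<Rightarrow> nat) \<Rightarrow> bool" where
  "embedding u w e \<longleftrightarrow>
     (\<forall>i < length u. e i < length w \<and> u ! i = w ! (e i)) \<and>
     (\<forall>i j. i < j \<and> j < length u \<longrightarrow> e i < e j)"

definition scattered_factor :: "'a list \<Rightarrow> 'a list \<Rightarrow> bool" where
  "scattered_factor u w \<longleftrightarrow> (\<exists>e. embedding u w e)"

definition shuffle :: "'a list \<Rightarrow> 'a list \<Rightarrow> 'a list set" where
  "shuffle u v = {w. length w = length u + length v \<and>
     (\<exists>e f. embedding u w e \<and> embedding v w f \<and>
            e ` {..<length u} \<inter> f ` {..<length v} = {} \<and>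
            e ` {..<length u} \<union> f ` {..<length v} = {..<length w})}"

definition compl_set :: "'a list \<Rightarrow> 'a list \<Rightarrow> 'a list set" where
  "compl_set w u = {v. length v = length w - length u \<and> w \<in> shuffle u v}"

definition perfect_shuffle :: "'a list \<Rightarrow> 'a list \<Rightarrow> 'a list" where
  "perfect_shuffle u v = concat (map (\<lambda>(a, b). [a, b]) (zip u v))"

end

theory Submission
  imports Defs "HOL-Library.Sublist"
begin

(* The embedding-based shuffle agrees with the recursive shuffles of the List library, so
   complements can be analysed letter by letter.

   If the perfect shuffle of z = a z' with itself is a shuffle of x and y, its first two
   letters a a go to x or y, and the rest is a shuffle of the remainders of x and y equal
   to the perfect shuffle of z' with itself.  The property x = z does not survive this
   step, but its generalisation  c^i x = c^j z <-> c^i z = c^j y  (for every letter c)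
   does; when c differs from a, one uses that a word q for which q z is a component of
   the perfect shuffle of z with itself consists of copies of the first letter of z.  For i = j = 0 it says that u is the only
   complement of u in its perfect shuffle.

   Conversely, if u = a u' is the only complement of u in w, then w begins with a a and
   u' is the only complement of u' in the rest of w, so w is the perfect shuffle by
   induction. *)

lemma embedding_less:
  "embedding u w e \<Longrightarrow> i < j \<Longrightarrow> j < length u \<Longrightarrow> e i < e j"
  unfolding embedding_def by blast

lemma embedding_nth:
  "embedding u w e \<Longrightarrow> i < length u \<Longrightarrow> e i < length w \<and> u ! i = w ! e i"
  unfolding embedding_def by blast

lemma shuffleI:
  assumes "length w = length u + length v" "embedding u w e" "embedding v w f"
    "e ` {..<length u} \<inter> f ` {..<length v} = {}"
    "e ` {..<length u} \<union> f ` {..<length v} = {..<length w}"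
  shows "w \<in> shuffle u v"
  using assms unfolding shuffle_def by blast

lemma shuffleE:
  assumes "w \<in> shuffle u v"
  obtains e f where "length w = length u + length v" "embedding u w e" "embedding v w f"
    "e ` {..<length u} \<inter> f ` {..<length v} = {}"
    "e ` {..<length u} \<union> f ` {..<length v} = {..<length w}"
  using assms unfolding shuffle_def by blast

lemma shuffle_commute: "shuffle u v = shuffle v u"
proof -
  have "w \<in> shuffle v u" if w_in: "w \<in> shuffle u v" for u v w :: "'a list"
  proof -
    obtain e f where "length w = length u + length v" "embedding u w e" "embedding v w f"
      "e ` {..<length u} \<inter> f ` {..<length v} = {}"
      "e ` {..<length u} \<union> f ` {..<length v} = {..<length w}"
      using shuffleE[OF w_in] .
    then show ?thesis
      by (intro shuffleI[of w v u f e]) (simp_all add: Int_commute Un_commute)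
  qed
  then show ?thesis by blast
qed

lemma Nil_in_shuffle_iff: "[] \<in> shuffle u v \<longleftrightarrow> u = [] \<and> v = []"
  by (auto simp: shuffle_def embedding_def)

lemma embedding_Cons_Suc:
  "embedding u w e \<Longrightarrow> embedding u (c # w) (Suc \<circ> e)"
  unfolding embedding_def by auto

lemma embedding_Cons_Cons:
  assumes "embedding u w e"
  shows "embedding (c # u) (c # w) (case_nat 0 (Suc \<circ> e))"
  using assms unfolding embedding_def by (auto simp: less_Suc_eq_0_disj)

lemma Cons_in_shuffle_leftI:
  assumes "w \<in> shuffle u v"
  shows "c # w \<in> shuffle (c # u) v"
proof -
  obtain e f where len: "length w = length u + length v"
    and e: "embedding u w e" and f: "embedding v w f"
    and disj: "e ` {..<length u} \<inter> f ` {..<length v} = {}"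
    and cover: "e ` {..<length u} \<union> f ` {..<length v} = {..<length w}"
    using shuffleE[OF assms] .
  have image_e: "case_nat 0 (Suc \<circ> e) ` {..<length (c # u)} = insert 0 (Suc ` e ` {..<length u})"
    by (simp add: lessThan_Suc_eq_insert_0 image_image)
  have image_f: "(Suc \<circ> f) ` {..<length v} = Suc ` f ` {..<length v}"
    by (simp add: image_comp)
  show ?thesis
  proof (rule shuffleI[OF _ embedding_Cons_Cons[OF e] embedding_Cons_Suc[OF f]])
    show "case_nat 0 (Suc \<circ> e) ` {..<length (c # u)} \<inter> (Suc \<circ> f) ` {..<length v} = {}"
      using disj unfolding image_e image_f by auto
    show "case_nat 0 (Suc \<circ> e) ` {..<length (c # u)} \<union> (Suc \<circ> f) ` {..<length v} =
      {..<length (c # w)}"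
    proof -
      have "insert 0 (Suc ` e ` {..<length u}) \<union> Suc ` f ` {..<length v} =
        insert 0 (Suc ` {..<length w})"
        unfolding cover[symmetric] by auto
      then show ?thesis
        unfolding image_e image_f by (simp add: lessThan_Suc_eq_insert_0)
    qed
  qed (use len in simp)
qed

lemma embedding_tl: "embedding (a # u) w e \<Longrightarrow> embedding u w (e \<circ> Suc)"
  unfolding embedding_def by auto

lemma embedding_shift_down:
  assumes e: "embedding u (c # w) e" and pos: "0 \<notin> e ` {..<length u}"
  shows "embedding u w (\<lambda>i. e i - 1)"
  unfolding embedding_def
proof (intro conjI allI impI)
  fix i assume "i < length u"
  moreover from this have "e i \<noteq> 0" using pos by auto
  ultimately show "e i - 1 < length w" "u ! i = w ! (e i - 1)"
    using embedding_nth[OF e, of i] by (auto simp: nth_Cons')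
next
  fix i j assume "i < j \<and> j < length u"
  moreover from this have "e i \<noteq> 0" using pos by auto
  ultimately show "e i - 1 < e j - 1"
    using embedding_less[OF e, of i j] by simp
qed

lemma image_pred_eq_vimage_Suc: "0 \<notin> A \<Longrightarrow> (\<lambda>p. p - 1) ` A = Suc -` A"
  by (auto simp: image_iff intro!: bexI[of _ "Suc _"]) (metis Suc_pred neq0_conv)

lemma Cons_in_shuffle_headD:
  assumes len: "length (c # w) = length u + length v"
    and e: "embedding u (c # w) e" and f: "embedding v (c # w) f"
    and disj: "e ` {..<length u} \<inter> f ` {..<length v} = {}"
    and cover: "e ` {..<length u} \<union> f ` {..<length v} = {..<length (c # w)}"
    and head: "0 \<in> e ` {..<length u}"
  shows "u \<noteq> [] \<and> hd u = c \<and> w \<in> shuffle (tl u) v"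
proof -
  obtain i where i: "i < length u" "e i = 0" using head by auto
  have "i = 0"
    using embedding_less[OF e, of 0 i] i by (cases i) auto
  with i obtain u' where u: "u = c # u'" and e0: "e 0 = 0"
    using embedding_nth[OF e, of 0] by (cases u) auto
  define A' where "A' = (e \<circ> Suc) ` {..<length u'}"
  have A: "e ` {..<length u} = insert 0 A'"
    unfolding A'_def u by (simp add: lessThan_Suc_eq_insert_0 image_image e0)
  have "0 \<notin> A'"
    using embedding_less[OF e, of 0] e0 unfolding A'_def u by fastforce
  have e': "embedding u' w (\<lambda>i. e (Suc i) - 1)"
    using embedding_shift_down[OF embedding_tl[OF e[unfolded u]]] \<open>0 \<notin> A'\<close>
    unfolding A'_def by (simp add: comp_def)
  have image_e': "(\<lambda>i. e (Suc i) - 1) ` {..<length u'} = Suc -` e ` {..<length u}"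
    using image_pred_eq_vimage_Suc[OF \<open>0 \<notin> A'\<close>]
    unfolding A A'_def by (auto simp: image_image)
  have "0 \<notin> f ` {..<length v}"
    using disj head by blast
  have f': "embedding v w (\<lambda>j. f j - 1)"
    using embedding_shift_down[OF f \<open>0 \<notin> f ` {..<length v}\<close>] .
  have image_f': "(\<lambda>j. f j - 1) ` {..<length v} = Suc -` f ` {..<length v}"
    using image_pred_eq_vimage_Suc[OF \<open>0 \<notin> f ` {..<length v}\<close>] by (simp add: image_image)
  have "w \<in> shuffle u' v"
  proof (rule shuffleI[OF _ e' f'])
    show "(\<lambda>i. e (Suc i) - 1) ` {..<length u'} \<inter> (\<lambda>j. f j - 1) ` {..<length v} = {}"
      using disj unfolding image_e' image_f' by auto
    show "(\<lambda>i. e (Suc i) - 1) ` {..<length u'} \<union> (\<lambda>j. f j - 1) ` {..<length v} =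
      {..<length w}"
      unfolding image_e' image_f' vimage_Un[symmetric] cover by auto
  qed (use len u in simp)
  then show ?thesis using u by simp
qed

lemma Cons_in_shuffle_iff:
  "c # w \<in> shuffle u v \<longleftrightarrow>
    (u \<noteq> [] \<and> hd u = c \<and> w \<in> shuffle (tl u) v \<or>
     v \<noteq> [] \<and> hd v = c \<and> w \<in> shuffle u (tl v))"
proof
  assume "c # w \<in> shuffle u v"
  then obtain e f where len: "length (c # w) = length u + length v"
    and e: "embedding u (c # w) e" and f: "embedding v (c # w) f"
    and disj: "e ` {..<length u} \<inter> f ` {..<length v} = {}"
    and cover: "e ` {..<length u} \<union> f ` {..<length v} = {..<length (c # w)}"
    by (rule shuffleE)
  have "0 \<in> e ` {..<length u} \<union> f ` {..<length v}"
    unfolding cover by simp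
  then show "u \<noteq> [] \<and> hd u = c \<and> w \<in> shuffle (tl u) v \<or>
    v \<noteq> [] \<and> hd v = c \<and> w \<in> shuffle u (tl v)"
  proof
    assume "0 \<in> e ` {..<length u}"
    then show ?thesis
      using Cons_in_shuffle_headD[OF len e f disj cover] by blast
  next
    assume "0 \<in> f ` {..<length v}"
    then have "v \<noteq> [] \<and> hd v = c \<and> w \<in> shuffle (tl v) u"
      using Cons_in_shuffle_headD[OF _ f e] len disj cover by (simp add: Int_commute Un_commute)
    then show ?thesis by (simp add: shuffle_commute)
  qed
next
  assume "u \<noteq> [] \<and> hd u = c \<and> w \<in> shuffle (tl u) v \<or>
    v \<noteq> [] \<and> hd v = c \<and> w \<in> shuffle u (tl v)"
  then show "c # w \<in> shuffle u v"
    using Cons_in_shuffle_leftI[of w "tl u" v c] Cons_in_shuffle_leftI[of w "tl v" u c]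
    by (auto simp: shuffle_commute)
qed

lemma shuffle_eq_shuffles: "shuffle u v = shuffles u v"
proof (rule set_eqI)
  show "w \<in> shuffle u v \<longleftrightarrow> w \<in> shuffles u v" for w
    by (induction w arbitrary: u v)
      (simp_all add: Nil_in_shuffle_iff Cons_in_shuffle_iff Cons_in_shuffles_iff)
qed

lemma compl_set_eq_shuffles: "compl_set w u = {v. w \<in> shuffles u v}"
  unfolding compl_set_def shuffle_eq_shuffles by (auto dest: length_shuffles)

lemma perfect_shuffle_Nil [simp]: "perfect_shuffle [] v = []"
  by (simp add: perfect_shuffle_def)

lemma perfect_shuffle_Cons_Cons [simp]:
  "perfect_shuffle (a # u) (b # v) = a # b # perfect_shuffle u v"
  by (simp add: perfect_shuffle_def)

lemma perfect_shuffle_in_shuffles: "perfect_shuffle u u \<in> shuffles u u"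
  by (induction u) (simp_all add: Cons_in_shuffles_leftI Cons_in_shuffles_rightI)

lemma in_shuffles_subseq_right: "zs \<in> shuffles xs ys \<Longrightarrow> subseq ys zs"
  by (induction zs arbitrary: xs ys) (auto simp: Cons_in_shuffles_iff neq_Nil_conv)

lemma subseq_imp_in_shuffles: "subseq xs zs \<Longrightarrow> \<exists>ys. zs \<in> shuffles xs ys"
  by (induction rule: list_emb.induct) (auto intro: Cons_in_shuffles_leftI Cons_in_shuffles_rightI)

lemma append_in_shufflesE:
  assumes "zs1 @ zs2 \<in> shuffles xs ys"
  obtains xs1 xs2 ys1 ys2 where "xs = xs1 @ xs2" "ys = ys1 @ ys2"
    "zs1 \<in> shuffles xs1 ys1" "zs2 \<in> shuffles xs2 ys2"
  using assms
proof (induction zs1 arbitrary: xs ys thesis)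
  case Nil
  then show ?case by fastforce
next
  case (Cons z zs1)
  from Cons.prems(2) consider
      xs' where "xs = z # xs'" "zs1 @ zs2 \<in> shuffles xs' ys"
    | ys' where "ys = z # ys'" "zs1 @ zs2 \<in> shuffles xs ys'"
    by (auto simp: Cons_in_shuffles_iff neq_Nil_conv)
  then show ?case
  proof cases
    case 1
    then show ?thesis
      using Cons.IH[of xs' ys] Cons.prems(1)[of "z # _"] by (metis Cons_in_shuffles_leftI append_Cons)
  next
    case 2
    then show ?thesis
      using Cons.IH[of xs ys'] Cons.prems(1)[of _ _ "z # _"] by (metis Cons_in_shuffles_rightI append_Cons)
  qed
qed

lemma Cons_Cons_in_shufflesE:
  assumes "a # a # zs \<in> shuffles xs ys"
  obtains m xs' ys' where "m \<le> 2" "xs = replicate m a @ xs'" "ys = replicate (2 - m) a @ ys'"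
    "zs \<in> shuffles xs' ys'"
proof -
  from assms have "[a, a] @ zs \<in> shuffles xs ys" by simp
  then obtain x1 xs' y1 ys' where xs: "xs = x1 @ xs'" and ys: "ys = y1 @ ys'"
    and head: "[a, a] \<in> shuffles x1 y1" and rest: "zs \<in> shuffles xs' ys'"
    by (rule append_in_shufflesE)
  have len: "length x1 \<le> 2" "length y1 = 2 - length x1"
    using length_shuffles[OF head] by simp_all
  have "\<forall>b\<in>set x1. b = a" "\<forall>b\<in>set y1. b = a"
    using set_shuffles[OF head] by auto
  then have "x1 = replicate (length x1) a" "y1 = replicate (2 - length x1) a"
    using len(2) by (metis replicate_length_same)+
  then show thesis
    using that[OF len(1) _ _ rest] xs ys by simp
qed

lemma perfect_shuffle_in_shuffles_appendD:
  assumes "perfect_shuffle z z \<in> shuffles (q @ z) y"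
  shows "set q \<subseteq> {hd z}"
  using assms
proof (induction z arbitrary: q y)
  case Nil
  then show ?case by simp
next
  case (Cons a z)
  obtain m x2 y2 where x: "(q @ [a]) @ z = replicate m a @ x2"
    and rest: "perfect_shuffle z z \<in> shuffles x2 y2"
    using Cons.prems by (auto elim: Cons_Cons_in_shufflesE)
  obtain us where "q @ [a] = replicate m a @ us \<and> us @ z = x2 \<or> (q @ [a]) @ us = replicate m a"
    using append_eq_append_conv2[THEN iffD1, OF x] by blast
  then show "set q \<subseteq> {hd (a # z)}"
  proof
    assume "q @ [a] = replicate m a @ us \<and> us @ z = x2"
    then have us: "q @ [a] = replicate m a @ us" and x2: "x2 = us @ z" by simp_all
    have "set q \<subseteq> {a} \<union> set us"
      using arg_cong[OF us, of set] by auto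
    moreover have "set us \<subseteq> {a}"
    proof (cases "us = []")
      case False
      then have "a = last us"
        using arg_cong[OF us, of last] by simp
      then have "a \<in> set us" using False by simp
      moreover have "set us \<subseteq> {hd z}"
        using Cons.IH[of us y2] rest x2 by simp
      ultimately show ?thesis by blast
    qed simp
    ultimately show ?thesis by auto
  next
    assume "(q @ [a]) @ us = replicate m a"
    then have "set ((q @ [a]) @ us) \<subseteq> {a}"
      by (simp add: set_replicate_conv_if)
    then show ?thesis by auto
  qed
qed

lemma replicate_append_cancel:
  "replicate (p + r) a @ s = replicate (q + r) a @ t \<longleftrightarrow> replicate p a @ s = replicate q a @ t"
proof -
  have "replicate (n + r) a = replicate r a @ replicate n a" for n
    by (metis add.commute replicate_add)
  then show ?thesis by simp
qed

lemma replicate_append_eq_replicate_append_Cons_iff: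
  assumes "c \<noteq> a"
  shows "replicate i c @ s = replicate j c @ a # t \<longleftrightarrow> i \<le> j \<and> s = replicate (j - i) c @ a # t"
proof (induction i arbitrary: j)
  case (Suc i)
  then show ?case using assms by (cases j) auto
qed simp

lemma perfect_shuffle_in_shuffles_replicate_iff:
  assumes "perfect_shuffle z z \<in> shuffles x y"
  shows "replicate i c @ x = replicate j c @ z \<longleftrightarrow> replicate i c @ z = replicate j c @ y"
  using assms
proof (induction z arbitrary: x y i j c)
  case Nil
  then show ?case by simp
next
  case (Cons a z)
  obtain m x2 y2 where m: "m \<le> 2" and x: "x = replicate m a @ x2"
    and y: "y = replicate (2 - m) a @ y2" and rest: "perfect_shuffle z z \<in> shuffles x2 y2"
    using Cons.prems by (auto elim: Cons_Cons_in_shufflesE)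
  have same_letter:
    "replicate i a @ x = replicate j a @ a # z \<longleftrightarrow> replicate i a @ a # z = replicate j a @ y"
    for i j
  proof -
    have "replicate i a @ x = replicate j a @ a # z \<longleftrightarrow>
      replicate (i + m) a @ x2 = replicate (j + 1) a @ z"
      by (simp add: x replicate_add replicate_app_Cons_same)
    also have "\<dots> \<longleftrightarrow> replicate (i + m) a @ z = replicate (j + 1) a @ y2"
      by (rule Cons.IH[OF rest])
    also have "\<dots> \<longleftrightarrow> replicate (i + 1 + m) a @ z = replicate (j + (2 - m) + m) a @ y2"
      using replicate_append_cancel[of "i + m" 1 a z "j + 1" y2] m
      by (simp add: ac_simps)
    also have "\<dots> \<longleftrightarrow> replicate (i + 1) a @ z = replicate (j + (2 - m)) a @ y2"
      by (rule replicate_append_cancel)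
    also have "\<dots> \<longleftrightarrow> replicate i a @ a # z = replicate j a @ y"
      by (simp add: y replicate_add replicate_app_Cons_same)
    finally show ?thesis .
  qed
  show ?case
  proof (cases "c = a")
    case True
    then show ?thesis using same_letter by simp
  next
    case False
    have no_prefix: "w \<noteq> replicate k c @ a # z"
      if "perfect_shuffle (a # z) (a # z) \<in> shuffles w w'" "k > 0" for w w' k
      using perfect_shuffle_in_shuffles_appendD[of "a # z" "replicate k c"] that False by auto
    have "x = a # z \<longleftrightarrow> a # z = y"
      using same_letter[of 0 0] by simp
    then show ?thesis
      using no_prefix[OF Cons.prems, of "j - i"] no_prefix[of y x "i - j"] Cons.prems
      by (auto simp: replicate_append_eq_replicate_append_Cons_iff[OF False] shuffles_commutes
          eq_commute[of "replicate i c @ a # z"])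
  qed
qed

lemma perfect_shuffle_in_shuffles_iff: "perfect_shuffle u u \<in> shuffles u v \<longleftrightarrow> v = u"
  using perfect_shuffle_in_shuffles_replicate_iff[of u u v 0 _ 0] perfect_shuffle_in_shuffles
  by auto

lemma unique_complement_imp_perfect_shuffle:
  assumes "\<forall>v. w \<in> shuffles u v \<longleftrightarrow> v = u"
  shows "w = perfect_shuffle u u"
  using assms
proof (induction u arbitrary: w)
  case Nil
  then have "w \<in> shuffles [] []" by blast
  then show ?case by simp
next
  case (Cons a u)
  have "w \<in> shuffles (a # u) (a # u)"
    using Cons.prems by blast
  then obtain w1 where w: "w = a # w1" and w1: "w1 \<in> shuffles u (a # u)"
    by (cases w) (auto simp: Cons_in_shuffles_iff shuffles_commutes)
  then obtain d w2 where w1_eq: "w1 = d # w2"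
    by (cases w1) auto
  have "subseq (a # u) (d # w2)"
    using in_shuffles_subseq_right w1 w1_eq by blast
  then have "subseq u w2"
    by (auto dest: subseq_Cons' split: if_splits)
  then obtain v2 where v2: "w2 \<in> shuffles u v2"
    using subseq_imp_in_shuffles by blast
  have "w \<in> shuffles (a # u) (d # v2)"
    using v2 by (simp add: w w1_eq Cons_in_shuffles_leftI Cons_in_shuffles_rightI)
  then have "d # v2 = a # u"
    using Cons.prems by blast
  then have "d = a" "v2 = u" by simp_all
  have "\<forall>v. w2 \<in> shuffles u v \<longleftrightarrow> v = u"
  proof (intro allI iffI)
    fix v
    assume "w2 \<in> shuffles u v"
    then have "w \<in> shuffles (a # u) (a # v)"
      by (simp add: w w1_eq \<open>d = a\<close> Cons_in_shuffles_leftI Cons_in_shuffles_rightI)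
    then show "v = u"
      using Cons.prems by blast
  qed (use v2 \<open>v2 = u\<close> in simp)
  then show ?case
    using Cons.IH by (simp add: w w1_eq \<open>d = a\<close>)
qed

theorem theorem36:
  fixes w u :: "'a list"
  assumes "scattered_factor u w"
  shows "compl_set w u = {u} \<longleftrightarrow> w = perfect_shuffle u u"
proof
  assume "compl_set w u = {u}"
  then have "\<forall>v. w \<in> shuffles u v \<longleftrightarrow> v = u"
    unfolding compl_set_eq_shuffles by blast
  then show "w = perfect_shuffle u u"
    by (rule unique_complement_imp_perfect_shuffle)
next
  assume "w = perfect_shuffle u u"
  then show "compl_set w u = {u}"
    unfolding compl_set_eq_shuffles by (auto simp: perfect_shuffle_in_shuffles_iff)
qed

end
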